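(* Let $\mathbf p=(p_1,p_2)^T\in\mathbb{Z}^2\setminus\{\mathbf 0\}$ with $\mathbf p\notin\{(\pm1,0)^T,(0,\pm1)^T,(\pm1,\pm1)^T,(\pm1,\pm2)^T,(\pm2,\pm1)^T\}$. (Galerkin) Then there exists $\mathbf a\in\mathbb{Z}^2$ such that, with $\rho_k=\frac1{|\mathbf p|^2}-\frac1{|\mathbf a+k\mathbf p|^2}$, one has $\rho_0<0$ (i.e. $|\mathbf a|<|\mathbf p|$), $\rho_k>0$ for all $k\in\mathbb{Z}\setminus\{0\}$, and $\rho_0+\rho_2<0$ or $\rho_0+\rho_{-2}<0$; in particular, for every positive integer $N$ large enough that $\mathbf a\pm2\mathbf p\in[-N,N]^2$, $\sqrt{-\rho_1(\rho_0+\rho_2)}$ or $\sqrt{-\rho_{-1}(\rho_0+\rho_{-2})}$ is a positive real number and all $\rho_k$ with $\mathbf a+k\mathbf p\in[-N,N]^2$, $k\neq0$, are positive. (Zeitlin) If moreover $\kappa=\gcd(|p_1|,|p_2|)$ is odd, then there exist $\mathbf a\in\mathbb{Z}^2$ and infinitely many (arbitrarily large) positive integers $N$ such that, with $\mathcal D=[-N,N]^2\cap\mathbb{Z}^2$, $\widehat{\mathbf k}$ the element of $\mathcal D$ congruent to $\mathbf k$ modulo $(2N+1)\mathbb{Z}^2$, $n=|\{\widehat{\mathbf a+k\mathbf p}:k\in\mathbb{Z}\}|$ and $\rho_k=\frac1{|\mathbf p|^2}-\frac1{|\widehat{\mathbf a+k\mathbf p}|^2}$, one has $\rho_0<0$,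 $\rho_k>0$ for $k=1,\dots,n-1$, and $\rho_0+\rho_2<0$ or $\rho_0+\rho_{n-2}<0$.
   Context: These are the conditions under which the class of Fourier modes $\{\mathbf a+k\mathbf p\}$ has exactly one mode strictly inside the disc $\{|\mathbf x|<|\mathbf p|\}$ and the explicit lower bound $\sqrt{-\rho_1(\rho_0+\rho_2)}$ (or $\sqrt{-\rho_{-1}(\rho_0+\rho_{-2})}$, resp. $\sqrt{-\rho_{n-1}(\rho_0+\rho_{n-2})}$) for a real eigenvalue of the linearised class matrix is real and positive. *)

theory Defs
  imports Complex_Main
begin

definition nsq :: "int \<times> int \<Rightarrow> real" where
  "nsq x = real_of_int ((fst x)\<^sup>2 + (snd x)\<^sup>2)"

definition mode :: "int \<times> int \<Rightarrow> int \<times> int \<Rightarrow> int \<Rightarrow> int \<times> int" where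
  "mode a p k = (fst a + k * fst p, snd a + k * snd p)"

definition inbox :: "int \<Rightarrow> int \<times> int \<Rightarrow> bool" where
  "inbox N x \<longleftrightarrow> \<bar>fst x\<bar> \<le> N \<and> \<bar>snd x\<bar> \<le> N"

text \<open>The representative in [-N,N]^2 of x modulo (2N+1) Z^2.\<close>
definition hatN :: "int \<Rightarrow> int \<times> int \<Rightarrow> int \<times> int" where
  "hatN N x = ((fst x + N) mod (2 * N + 1) - N, (snd x + N) mod (2 * N + 1) - N)"

definition rhoG :: "int \<times> int \<Rightarrow> int \<times> int \<Rightarrow> int \<Rightarrow> real" where
  "rhoG p a k = 1 / nsq p - 1 / nsq (mode a p k)"

definition rhoZ :: "int \<Rightarrow> int \<times> int \<Rightarrow> int \<times> int \<Rightarrow> int \<Rightarrow> real" where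
  "rhoZ N p a k = 1 / nsq p - 1 / nsq (hatN N (mode a p k))"

definition nclass :: "int \<Rightarrow> int \<times> int \<Rightarrow> int \<times> int \<Rightarrow> nat" where
  "nclass N p a = card ((\<lambda>k. hatN N (mode a p k)) ` (UNIV :: int set))"

end

theory Submission
  imports Defs
begin

text \<open>Choose \<open>a\<close> with \<open>0 < |a| < |p|\<close> and \<open>2|a\<cdot>p| < |a|\<^sup>2\<close>. Then
  \<open>|a + kp|\<^sup>2 = |a|\<^sup>2 + 2k a\<cdot>p + k\<^sup>2|p|\<^sup>2 > |p|\<^sup>2\<close> for every \<open>k \<noteq> 0\<close>, so exactly one mode of
  the class lies in the disc; \<open>\<rho>\<^sub>0 + \<rho>\<^sub>2 < 0\<close> is one more inequality between the three integers
  \<open>|a|\<^sup>2, |p|\<^sup>2, |a + 2p|\<^sup>2\<close>. For long \<open>p\<close> the vector \<open>p\<close> halved and rotated by a right angle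
  works; for the finitely many short \<open>p\<close> a witness is found by evaluation.

  In the Zeitlin truncation, reduction modulo \<open>(2N + 1)\<int>\<^sup>2\<close> moves \<open>a + kp\<close> by a lattice
  vector \<open>(2N + 1) w\<close>. If \<open>w\<close> is not parallel to \<open>p\<close>, the cross product with \<open>p\<close> becomes
  at least \<open>|p|\<^sup>2 + 1\<close> for large \<open>N\<close>, which forces the reduced mode out of the disc. If it is
  parallel and \<open>2N + 1\<close> is a multiple of \<open>gcd(p\<^sub>1, p\<^sub>2)\<close> (for infinitely many \<open>N\<close> when the gcd
  is odd), the reduced mode is again some \<open>a + jp\<close>. So \<open>a\<close> is the only reduced mode in the
  disc, and it does not recur before the class of \<open>n\<close> distinct modes closes up.\<close>

definition idot :: "int \<times> int \<Rightarrow> int \<times> int \<Rightarrow> int" where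
  "idot x y = fst x * fst y + snd x * snd y"

definition cross :: "int \<times> int \<Rightarrow> int \<times> int \<Rightarrow> int" where
  "cross x y = fst x * snd y - snd x * fst y"

lemma nsq_eq_idot: "nsq x = of_int (idot x x)"
  by (simp add: nsq_def idot_def power2_eq_square)

lemma mode_0 [simp]: "mode a p 0 = a"
  by (simp add: mode_def)

lemma idot_mode_mode:
  "idot (mode a p k) (mode a p k) = idot a a + 2 * k * idot a p + k\<^sup>2 * idot p p"
  by (simp add: idot_def mode_def power2_eq_square algebra_simps)

lemma idot_square_plus_cross_square:
  "(idot x p)\<^sup>2 + (cross x p)\<^sup>2 = idot x x * idot p p"
  by (simp add: idot_def cross_def power2_eq_square algebra_simps)

lemma quadratic_gt_leading_coeff:
  fixes A D P k :: int
  assumes "0 < A" "A < P" "2 * \<bar>D\<bar> < A" "k \<noteq> 0"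
  shows "P < A + 2 * k * D + k\<^sup>2 * P"
proof -
  have "- (2 * k * D) \<le> \<bar>k\<bar> * (2 * \<bar>D\<bar>)"
    by (metis abs_ge_minus_self abs_mult abs_numeral mult.assoc mult.left_commute)
  also have "\<dots> < \<bar>k\<bar> * A"
    using assms by simp
  finally have "A - \<bar>k\<bar> * A < A + 2 * k * D"
    by simp
  moreover have "P - \<bar>k\<bar> * P \<le> A - \<bar>k\<bar> * A"
  proof -
    have "(\<bar>k\<bar> - 1) * A \<le> (\<bar>k\<bar> - 1) * P"
      using assms by (intro mult_left_mono) auto
    then show ?thesis by (simp add: algebra_simps)
  qed
  moreover have "\<bar>k\<bar> * P \<le> k\<^sup>2 * P"
  proof -
    have "\<bar>k\<bar> * 1 \<le> \<bar>k\<bar> * \<bar>k\<bar>"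
      using assms(4) by (intro mult_left_mono) auto
    then show ?thesis
      using assms by (intro mult_right_mono) (auto simp: power2_eq_square abs_mult_self_eq)
  qed
  ultimately show ?thesis by linarith
qed

text \<open>The last clause is \<open>\<rho>\<^sub>0 + \<rho>\<^sub>2 < 0\<close> with the denominators cleared.\<close>

definition galerkin_witness :: "int \<times> int \<Rightarrow> int \<times> int \<Rightarrow> bool" where
  "galerkin_witness p a \<longleftrightarrow>
     (let A = idot a a; P = idot p p; B = idot (mode a p 2) (mode a p 2) in
      0 < A \<and> A < P \<and> 2 * \<bar>idot a p\<bar> < A \<and> 2 * A * B < P * (A + B))"

lemma galerkin_witness_idot:
  assumes "galerkin_witness p a"
  shows "0 < idot a a" "idot a a < idot p p" "0 < idot p p"
  using assms by (auto simp: galerkin_witness_def Let_def)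

lemma galerkin_witness_idot_mode_gt:
  assumes "galerkin_witness p a" "k \<noteq> 0"
  shows "idot p p < idot (mode a p k) (mode a p k)"
proof -
  have "0 < idot a a" "idot a a < idot p p" "2 * \<bar>idot a p\<bar> < idot a a"
    using assms(1) by (simp_all add: galerkin_witness_def Let_def)
  from quadratic_gt_leading_coeff[OF this assms(2)]
  show ?thesis
    by (simp only: idot_mode_mode)
qed

lemma rhoG_pos:
  "0 < nsq p \<Longrightarrow> nsq p < nsq (mode a p k) \<Longrightarrow> 0 < rhoG p a k"
  by (simp add: rhoG_def frac_less2)

lemma rhoZ_pos:
  "0 < nsq p \<Longrightarrow> nsq p < nsq (hatN N (mode a p k)) \<Longrightarrow> 0 < rhoZ N p a k"
  by (simp add: rhoZ_def frac_less2)

lemma galerkin_witness_rhoG: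
  assumes "galerkin_witness p a"
  shows "rhoG p a 0 < 0" "k \<noteq> 0 \<Longrightarrow> 0 < rhoG p a k" "rhoG p a 0 + rhoG p a 2 < 0"
proof -
  define A P B where "A = idot a a" and "P = idot p p" and "B = idot (mode a p 2) (mode a p 2)"
  have AP: "0 < A" "A < P" and B: "2 * A * B < P * (A + B)"
    using assms by (simp_all add: galerkin_witness_def Let_def A_def P_def B_def)
  have "0 < B"
    using galerkin_witness_idot_mode_gt[OF assms, of 2] AP by (simp add: B_def P_def)
  show "rhoG p a 0 < 0"
    using AP by (simp add: rhoG_def nsq_eq_idot frac_less2 flip: A_def P_def)
  show "0 < rhoG p a k" if "k \<noteq> 0"
    using rhoG_pos galerkin_witness_idot_mode_gt[OF assms that] galerkin_witness_idot[OF assms]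
    by (simp add: nsq_eq_idot)
  have "2 * real_of_int A * real_of_int B < real_of_int P * (real_of_int A + real_of_int B)"
    using B by (metis of_int_add of_int_mult of_int_less_iff of_int_numeral)
  with AP \<open>0 < B\<close> have "2 / real_of_int P < 1 / real_of_int A + 1 / real_of_int B"
    by (simp add: field_simps)
  then show "rhoG p a 0 + rhoG p a 2 < 0"
    by (simp add: rhoG_def nsq_eq_idot flip: A_def P_def B_def)
qed

lemma galerkin_witnessI:
  assumes "0 < idot a a" "2 * \<bar>idot a p\<bar> < idot a a" "2 * idot a a < idot p p"
  shows "galerkin_witness p a"
proof -
  define A P B where "A = idot a a" and "P = idot p p" and "B = idot (mode a p 2) (mode a p 2)"
  have "B = A + 4 * idot a p + 4 * P"
    by (simp add: B_def A_def P_def idot_mode_mode)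
  with assms have "0 < B"
    by (simp add: A_def P_def)
  with assms have "2 * A * B < P * B"
    by (simp add: A_def P_def)
  also have "\<dots> \<le> P * (A + B)"
    using assms by (simp add: A_def P_def algebra_simps)
  finally show ?thesis
    using assms by (simp add: galerkin_witness_def Let_def flip: A_def P_def B_def)
qed

lemma galerkin_witness_half_perp:
  assumes "5 \<le> \<bar>fst p div 2\<bar> + \<bar>snd p div 2\<bar>"
  shows "galerkin_witness p (- (snd p div 2), fst p div 2)"
proof -
  define u v r1 r2 where "u = fst p div 2" and "v = snd p div 2"
    and "r1 = fst p mod 2" and "r2 = snd p mod 2"
  have p: "p = (2 * u + r1, 2 * v + r2)"
    by (simp add: u_def v_def r1_def r2_def)
  have r: "0 \<le> r1" "r1 \<le> 1" "0 \<le> r2" "r2 \<le> 1"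
    by (simp_all add: r1_def r2_def)
  define a where "a = (- v, u)"
  define s t where "s = \<bar>u\<bar>" and "t = \<bar>v\<bar>"
  have st: "5 \<le> s + t"
    using assms by (simp add: u_def v_def s_def t_def)
  have A: "idot a a = s * s + t * t"
    by (simp add: a_def idot_def s_def t_def abs_mult_self_eq)
  have "5 * (s + t) \<le> (s + t) * (s + t)"
    using st by (intro mult_right_mono) auto
  moreover have "(s + t) * (s + t) \<le> 2 * (s * s + t * t)"
    using zero_le_square[of "s - t"] by (simp add: algebra_simps)
  ultimately have "5 * (s + t) \<le> 2 * idot a a"
    unfolding A by (rule order_trans)
  with st have A_gt: "2 * (s + t) < idot a a"
    by arith
  with st have A_pos: "0 < idot a a"
    by arith
  have abs_mult_le: "\<bar>x * r\<bar> \<le> \<bar>x\<bar>" if "0 \<le> r" "r \<le> 1" for x r :: int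
    using mult_left_mono[OF that(2), of "\<bar>x\<bar>"] that by (simp add: abs_mult)
  have bits: "\<bar>u * r2\<bar> \<le> s" "\<bar>v * r1\<bar> \<le> t" "\<bar>u * r1\<bar> \<le> s" "\<bar>v * r2\<bar> \<le> t"
    using r abs_mult_le by (simp_all add: s_def t_def)
  have "idot a p = u * r2 - v * r1"
    by (simp add: a_def p idot_def algebra_simps)
  with bits have "\<bar>idot a p\<bar> \<le> s + t"
    by (simp add: abs_le_iff)
  with A_gt have "2 * \<bar>idot a p\<bar> < idot a a"
    by arith
  moreover have "2 * idot a a < idot p p"
  proof -
    have "idot p p = 4 * idot a a + 4 * (u * r1 + v * r2) + r1 * r1 + r2 * r2"
      by (simp add: a_def p idot_def algebra_simps)
    moreover have "- s \<le> u * r1" "- t \<le> v * r2" "0 \<le> r1 * r1" "0 \<le> r2 * r2"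
      using bits(3,4) by (simp_all add: abs_le_iff)
    ultimately show ?thesis
      using A_gt by arith
  qed
  ultimately have "galerkin_witness p a"
    using galerkin_witnessI[OF A_pos] by blast
  then show ?thesis
    by (simp add: a_def u_def v_def)
qed

text \<open>Short \<open>p\<close>, i.e. those not covered by the previous lemma, lie in \<open>[-9, 9]\<^sup>2\<close>.\<close>

lemma galerkin_witness_short:
  "\<forall>p1\<in>set [-9..9]. \<forall>p2\<in>set [-9..9].
     (p1, p2) = (0, 0) \<or> (\<bar>p1\<bar>, \<bar>p2\<bar>) \<in> {(1, 0), (0, 1), (1, 1), (1, 2), (2, 1)} \<or>
     (\<exists>a\<in>set [(- (p2 div 2), p1 div 2), (-2, -1), (-1, -2), (-3, 0), (-1, 2), (-2, -2), (-2, 1), (0, -3)].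
        galerkin_witness (p1, p2) a)"
  by code_simp

lemma galerkin_witness_exists:
  assumes "p \<noteq> (0, 0)"
    and "(\<bar>fst p\<bar>, \<bar>snd p\<bar>) \<notin> {(1, 0), (0, 1), (1, 1), (1, 2), (2, 1)}"
  shows "\<exists>a. galerkin_witness p a"
proof (cases "5 \<le> \<bar>fst p div 2\<bar> + \<bar>snd p div 2\<bar>")
  case True
  then show ?thesis
    using galerkin_witness_half_perp by blast
next
  case False
  obtain p1 p2 where p: "p = (p1, p2)"
    by (cases p)
  from False have "p1 \<in> {-9..9}" "p2 \<in> {-9..9}"
    unfolding p by simp_all linarith+
  with galerkin_witness_short[unfolded set_upto]
  have "(p1, p2) = (0, 0) \<or> (\<bar>p1\<bar>, \<bar>p2\<bar>) \<in> {(1, 0), (0, 1), (1, 1), (1, 2), (2, 1)} \<or>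
    (\<exists>a. galerkin_witness (p1, p2) a)"
    by blast
  with assms show ?thesis
    by (auto simp: p)
qed

lemma hatN_eq_iff:
  "hatN N x = hatN N y \<longleftrightarrow> (2 * N + 1) dvd fst x - fst y \<and> (2 * N + 1) dvd snd x - snd y"
  by (simp add: hatN_def prod_eq_iff mod_eq_dvd_iff)

lemma hatN_inbox: "inbox N x \<Longrightarrow> hatN N x = x"
  by (simp add: hatN_def inbox_def abs_le_iff prod_eq_iff)

lemma hatN_lattice_shift:
  "\<exists>w. hatN N x = (fst x + (2 * N + 1) * fst w, snd x + (2 * N + 1) * snd w)"
proof -
  have "(y + N) mod (2 * N + 1) - N = y + (2 * N + 1) * (- ((y + N) div (2 * N + 1)))" for y
    using minus_mult_div_eq_mod[of "y + N" "2 * N + 1"] by (simp add: algebra_simps)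
  then have "hatN N x = (fst x + (2 * N + 1) * (- ((fst x + N) div (2 * N + 1))),
      snd x + (2 * N + 1) * (- ((snd x + N) div (2 * N + 1))))"
    by (simp only: hatN_def)
  then show ?thesis
    by (metis fst_conv snd_conv)
qed

lemma cross_mode_left: "cross (mode a p k) p = cross a p"
  by (simp add: cross_def mode_def algebra_simps)

lemma idot_gt_of_cross:
  assumes "0 < idot p p" "idot p p + 1 \<le> \<bar>cross x p\<bar>"
  shows "idot p p < idot x x"
proof -
  have "(idot p p + 1) * (idot p p + 1) \<le> \<bar>cross x p\<bar> * \<bar>cross x p\<bar>"
    using assms by (intro mult_mono) auto
  also have "\<dots> = (cross x p)\<^sup>2"
    by (simp add: power2_eq_square abs_mult_self_eq)
  also have "\<dots> \<le> idot x x * idot p p"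
    unfolding idot_square_plus_cross_square[symmetric] by simp
  finally have "(idot p p + 1) * (idot p p + 1) \<le> idot x x * idot p p" .
  moreover have "idot p p * idot p p < (idot p p + 1) * (idot p p + 1)"
    using assms(1) by (simp add: algebra_simps)
  ultimately have "idot p p * idot p p < idot x x * idot p p"
    by linarith
  with assms(1) show ?thesis
    by simp
qed

lemma cross_eq_0_imp_gcd_multiple:
  assumes "cross w p = 0"
  shows "\<exists>s. gcd (fst p) (snd p) * fst w = s * fst p \<and> gcd (fst p) (snd p) * snd w = s * snd p"
proof -
  obtain u v where uv: "u * fst p + v * snd p = gcd (fst p) (snd p)"
    using bezout_int by blast
  define s where "s = u * fst w + v * snd w"
  have "fst w * snd p = snd w * fst p"
    using assms by (simp add: cross_def)
  then have "gcd (fst p) (snd p) * fst w = s * fst p" "gcd (fst p) (snd p) * snd w = s * snd p"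
    by (simp_all flip: uv add: s_def algebra_simps)
  then show ?thesis
    by blast
qed

lemma hatN_mode_cases:
  assumes P_pos: "0 < idot p p"
    and far: "\<And>j. j \<noteq> 0 \<Longrightarrow> idot p p < idot (mode a p j) (mode a p j)"
    and dvd: "gcd (fst p) (snd p) dvd 2 * N + 1"
    and big: "\<bar>cross a p\<bar> + idot p p < 2 * N + 1"
  shows "hatN N (mode a p k) = a \<or>
    idot p p < idot (hatN N (mode a p k)) (hatN N (mode a p k))"
proof -
  define M x where "M = 2 * N + 1" and "x = hatN N (mode a p k)"
  obtain w where x: "x = (fst (mode a p k) + M * fst w, snd (mode a p k) + M * snd w)"
    using hatN_lattice_shift unfolding x_def M_def by blast
  show ?thesis
  proof (cases "cross w p = 0")
    case False
    have "0 < M"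
      using big P_pos unfolding M_def by arith
    then have "M * 1 \<le> M * \<bar>cross w p\<bar>"
      using False by (intro mult_left_mono) auto
    moreover have "cross x p = cross a p + M * cross w p"
      using cross_mode_left[of a p k] by (simp add: x cross_def algebra_simps)
    ultimately have "idot p p + 1 \<le> \<bar>cross x p\<bar>"
      using big unfolding M_def by (simp add: abs_mult)
    then show ?thesis
      using idot_gt_of_cross[OF P_pos] x_def by blast
  next
    case True
    obtain s where s: "gcd (fst p) (snd p) * fst w = s * fst p" "gcd (fst p) (snd p) * snd w = s * snd p"
      using cross_eq_0_imp_gcd_multiple[OF True] by blast
    obtain m where m: "M = gcd (fst p) (snd p) * m"
      using dvd unfolding M_def by blast
    have "M * fst w = m * s * fst p" "M * snd w = m * s * snd p"
      using s by (simp_all add: m algebra_simps)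
    then have "x = mode a p (k + m * s)"
      by (simp add: x mode_def algebra_simps)
    then show ?thesis
      using far[of "k + m * s"] x_def by (cases "k + m * s = 0") auto
  qed
qed

lemma nclass_le_period:
  assumes period: "hatN N (mode a p k) = hatN N a" and "0 < k"
  shows "int (nclass N p a) \<le> k"
proof -
  define f where "f j = hatN N (mode a p j)" for j
  have dvd: "(2 * N + 1) dvd k * fst p" "(2 * N + 1) dvd k * snd p"
    using period by (simp_all add: hatN_eq_iff mode_def)
  have "f j = f (j mod k)" for j
  proof -
    have "j - j mod k = j div k * k"
      by (simp add: minus_mod_eq_mult_div)
    then have "fst (mode a p j) - fst (mode a p (j mod k)) = j div k * (k * fst p)"
      "snd (mode a p j) - snd (mode a p (j mod k)) = j div k * (k * snd p)"
      by (simp_all add: mode_def flip: left_diff_distrib mult.assoc)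
    with dvd show ?thesis
      unfolding f_def hatN_eq_iff by simp
  qed
  moreover have "j mod k \<in> {0..<k}" for j
    using \<open>0 < k\<close> by simp
  ultimately have "range f \<subseteq> f ` {0..<k}"
    by (metis image_subsetI rev_image_eqI)
  then have "card (range f) \<le> card (f ` {0..<k})"
    by (intro card_mono) auto
  also have "\<dots> \<le> card {0..<k}"
    by (rule card_image_le) simp
  finally show ?thesis
    using \<open>0 < k\<close> by (simp add: nclass_def f_def)
qed

lemma zeitlin_conditions:
  assumes gw: "galerkin_witness p a"
    and dvd: "gcd (fst p) (snd p) dvd 2 * N + 1"
    and box: "inbox N a" "inbox N (mode a p 2)"
    and big: "\<bar>cross a p\<bar> + idot p p < 2 * N + 1"
  shows "N > 0 \<and> (\<forall>k. hatN N (mode a p k) \<noteq> (0, 0)) \<and> rhoZ N p a 0 < 0 \<and>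
    (\<forall>k. 1 \<le> k \<and> k \<le> int (nclass N p a) - 1 \<longrightarrow> rhoZ N p a k > 0) \<and>
    (rhoZ N p a 0 + rhoZ N p a 2 < 0 \<or> rhoZ N p a 0 + rhoZ N p a (int (nclass N p a) - 2) < 0)"
proof -
  note idot = galerkin_witness_idot[OF gw]
  have cases: "hatN N (mode a p k) = a \<or>
      idot p p < idot (hatN N (mode a p k)) (hatN N (mode a p k))" for k
    using hatN_mode_cases[OF idot(3) galerkin_witness_idot_mode_gt[OF gw] dvd big] .
  have hat_a: "hatN N a = a" and hat_2: "hatN N (mode a p 2) = mode a p 2"
    using box by (simp_all add: hatN_inbox)
  have "N > 0"
    using big idot(3) by arith
  moreover have "hatN N (mode a p k) \<noteq> (0, 0)" for k
    using cases[of k] idot by (auto simp: idot_def)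
  moreover have "rhoZ N p a 0 = rhoG p a 0" "rhoZ N p a 2 = rhoG p a 2"
    by (simp_all add: rhoZ_def rhoG_def hat_a hat_2)
  moreover have "rhoZ N p a k > 0" if "1 \<le> k" "k \<le> int (nclass N p a) - 1" for k
  proof -
    have "hatN N (mode a p k) \<noteq> a"
      using nclass_le_period[of N a p k] that hat_a by auto
    then show ?thesis
      using cases[of k] idot by (intro rhoZ_pos) (simp_all add: nsq_eq_idot)
  qed
  ultimately show ?thesis
    using galerkin_witness_rhoG[OF gw] by auto
qed

lemma infinite_odd_divisor_of_double_succ:
  fixes g N0 :: int
  assumes "odd g"
  shows "infinite {N. N0 \<le> N \<and> g dvd 2 * N + 1}"
proof -
  obtain c where c: "\<bar>g\<bar> = 2 * c + 1"
    using assms by (metis dvd_abs_iff oddE)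
  define f where "f t = \<bar>g\<bar> * (int t + \<bar>N0\<bar>) + c" for t :: nat
  have "0 \<le> c"
    using c by arith
  have "range f \<subseteq> {N. N0 \<le> N \<and> g dvd 2 * N + 1}"
  proof (rule image_subsetI)
    fix t
    have "int t + \<bar>N0\<bar> \<le> \<bar>g\<bar> * (int t + \<bar>N0\<bar>)"
      using c \<open>0 \<le> c\<close> by (simp add: algebra_simps)
    moreover have "2 * f t + 1 = \<bar>g\<bar> * (2 * (int t + \<bar>N0\<bar>) + 1)"
      by (simp add: f_def c algebra_simps)
    ultimately show "f t \<in> {N. N0 \<le> N \<and> g dvd 2 * N + 1}"
      using \<open>0 \<le> c\<close> by (simp add: f_def)
  qed
  moreover have "inj f"
    using c \<open>0 \<le> c\<close> by (auto simp: inj_def f_def)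
  then have "infinite (range f)"
    using finite_imageD by blast
  ultimately show ?thesis
    using infinite_super by blast
qed

lemma zeitlin_modes_infinite:
  assumes gw: "galerkin_witness p a" and odd: "odd (gcd \<bar>fst p\<bar> \<bar>snd p\<bar>)"
  shows "infinite {N. N > 0 \<and> (\<forall>k. hatN N (mode a p k) \<noteq> (0, 0)) \<and> rhoZ N p a 0 < 0 \<and>
    (\<forall>k. 1 \<le> k \<and> k \<le> int (nclass N p a) - 1 \<longrightarrow> rhoZ N p a k > 0) \<and>
    (rhoZ N p a 0 + rhoZ N p a 2 < 0 \<or> rhoZ N p a 0 + rhoZ N p a (int (nclass N p a) - 2) < 0)}"
    (is "infinite ?good")
proof (rule infinite_super)
  define N0 where "N0 = \<bar>fst a\<bar> + \<bar>snd a\<bar> + \<bar>fst (mode a p 2)\<bar> + \<bar>snd (mode a p 2)\<bar> +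
    \<bar>cross a p\<bar> + idot p p"
  have "0 \<le> idot p p"
    using galerkin_witness_idot[OF gw] by simp
  show "{N. N0 \<le> N \<and> gcd (fst p) (snd p) dvd 2 * N + 1} \<subseteq> ?good"
  proof
    fix N
    assume "N \<in> {N. N0 \<le> N \<and> gcd (fst p) (snd p) dvd 2 * N + 1}"
    then have "N0 \<le> N" and dvd: "gcd (fst p) (snd p) dvd 2 * N + 1"
      by simp_all
    with \<open>0 \<le> idot p p\<close>
    have "inbox N a" "inbox N (mode a p 2)" "\<bar>cross a p\<bar> + idot p p < 2 * N + 1"
      unfolding N0_def inbox_def by arith+
    from zeitlin_conditions[OF gw dvd this] show "N \<in> ?good"
      by simp
  qed
  show "infinite {N. N0 \<le> N \<and> gcd (fst p) (snd p) dvd 2 * N + 1}"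
    using infinite_odd_divisor_of_double_succ odd by simp
qed

theorem lemma7:
  fixes p :: "int \<times> int"
  assumes "p \<noteq> (0, 0)"
    and "(\<bar>fst p\<bar>, \<bar>snd p\<bar>) \<notin> {(1, 0), (0, 1), (1, 1), (1, 2), (2, 1)}"
  shows "(\<exists>a :: int \<times> int.
            rhoG p a 0 < 0 \<and>
            (\<forall>k::int. k \<noteq> 0 \<longrightarrow> rhoG p a k > 0) \<and>
            (rhoG p a 0 + rhoG p a 2 < 0 \<or> rhoG p a 0 + rhoG p a (-2) < 0) \<and>
            (\<forall>N::int. N > 0 \<and> inbox N (mode a p 2) \<and> inbox N (mode a p (-2)) \<longrightarrow>
               (sqrt (- rhoG p a 1 * (rhoG p a 0 + rhoG p a 2)) > 0 \<or>
                sqrt (- rhoG p a (-1) * (rhoG p a 0 + rhoG p a (-2))) > 0) \<and>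
               (\<forall>k::int. k \<noteq> 0 \<and> inbox N (mode a p k) \<longrightarrow> rhoG p a k > 0)))
       \<and>
         (odd (gcd \<bar>fst p\<bar> \<bar>snd p\<bar>) \<longrightarrow>
           (\<exists>a :: int \<times> int. infinite {N :: int. N > 0 \<and>
              (\<forall>k::int. hatN N (mode a p k) \<noteq> (0, 0)) \<and>
              rhoZ N p a 0 < 0 \<and>
              (\<forall>k::int. 1 \<le> k \<and> k \<le> int (nclass N p a) - 1 \<longrightarrow> rhoZ N p a k > 0) \<and>
              (rhoZ N p a 0 + rhoZ N p a 2 < 0 \<or>
               rhoZ N p a 0 + rhoZ N p a (int (nclass N p a) - 2) < 0)}))"
proof -
  obtain a where gw: "galerkin_witness p a"
    using galerkin_witness_exists[OF assms] by blast
  note rho = galerkin_witness_rhoG[OF gw]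
  have "0 < - rhoG p a 1 * (rhoG p a 0 + rhoG p a 2)"
    using rho(2)[of 1] rho(3) by (simp add: mult_pos_neg)
  then have "sqrt (- rhoG p a 1 * (rhoG p a 0 + rhoG p a 2)) > 0"
    by simp
  then show ?thesis
    using rho zeitlin_modes_infinite[OF gw] by blast
qed

end
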